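(* Let $p>5$ be a prime with $p\equiv 3\pmod 4$. Then $$\binom{-1/4}{\frac{p-1}{2}}^{-1}\equiv\frac{(-1)^{(p+1)/4}}{\binom{(p-1)/2}{(p-3)/4}}\bigl(1-3p+p\,q_p(2)\bigr)\pmod{p^2}.$$
   Context: $q_p(2)=(2^{p-1}-1)/p$ is the Fermat quotient. For a rational $a$ and integer $n\ge0$, $\binom{a}{n}=a(a-1)\cdots(a-n+1)/n!$. For rationals $a,b$ with denominators prime to $p$, $a\equiv b\pmod{p^m}$ means $(a-b)/p^m$ has denominator prime to $p$. *)

theory Defs
  imports Complex_Main "HOL-Computational_Algebra.Primes"
begin

definition p_integral :: "nat \<Rightarrow> rat \<Rightarrow> bool" where
  "p_integral p x \<longleftrightarrow> coprime (snd (quotient_of x)) (int p)"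

definition rat_cong :: "rat \<Rightarrow> rat \<Rightarrow> nat \<Rightarrow> nat \<Rightarrow> bool" where
  "rat_cong a b p m \<longleftrightarrow> p_integral p a \<and> p_integral p b \<and>
     p_integral p ((a - b) / of_nat p ^ m)"

definition fermat_quot2 :: "nat \<Rightarrow> rat" where
  "fermat_quot2 p = (2 ^ (p - 1) - 1) / of_nat p"

end

theory Submission
  imports Defs "HOL-Number_Theory.Number_Theory"
begin

(* Write p = 4m + 3 and n = (p - 1)/2 = 2m + 1. Since binom(-1/4, n) = -P / (4^n n!) with
   P = prod_{k<n} (4k + 1) and p q_p(2) = 4^n - 1, the claim is the integer congruence
     (-1)^m (4^n - 3p) P == 4^n n! binom(n, m)   (mod p^2).
   Pairing the factors of P as p - (4j + 2) and p + (4j + 2) gives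
     P (2p - 1) = prod_{j<=m} (p^2 - (4j + 2)^2) == (-1)^(m+1) T^2   (mod p^2),
   where T = prod_{j<=m} (4j + 2) = 2 n!/m!. After multiplying by the p-adic unit
   m!^2 (p + 1)(2p - 1), what remains is (3p - 4^n)(p + 1) == 4^n (2p - 1) (mod p^2),
   which follows from 4^n == 1 (mod p). *)

lemma p_integral_of_int_div:
  fixes x y :: int
  assumes "y \<noteq> 0" and "coprime y (int p)"
  shows "p_integral p (of_int x / of_int y)"
proof -
  obtain a d where q: "quotient_of (of_int x / of_int y :: rat) = (a, d)"
    by (cases "quotient_of (of_int x / of_int y :: rat)")
  have "(of_int x / of_int y :: rat) = of_int a / of_int d" and "d > 0" and "coprime a d"
    using quotient_of_div[OF q] quotient_of_denom_pos[OF q] quotient_of_coprime[OF q] by auto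
  then have "x * d = a * y"
    using \<open>y \<noteq> 0\<close> by (simp add: field_simps flip: of_int_mult of_int_eq_iff)
  then have "d dvd y"
    using \<open>coprime a d\<close> by (metis coprime_commute coprime_dvd_mult_right_iff dvd_triv_right)
  then obtain e where "y = d * e" ..
  then show ?thesis
    using assms(2) q by (simp add: p_integral_def)
qed

lemma rat_cong_of_int_divI:
  fixes X Y U V :: int
  assumes "Y \<noteq> 0" "V \<noteq> 0" "coprime Y (int p)" "coprime V (int p)" "p > 0"
    and "[X * V = U * Y] (mod int p ^ k)"
  shows "rat_cong (of_int X / of_int Y) (of_int U / of_int V) p k"
proof -
  obtain K where K: "X * V - U * Y = int p ^ k * K"
    using assms(6) by (auto simp: cong_iff_dvd_diff)
  have "(of_int X / of_int Y - of_int U / of_int V :: rat) = of_int (int p ^ k * K) / of_int (Y * V)"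
    using assms(1,2) unfolding K[symmetric] by (simp add: field_simps)
  then have "(of_int X / of_int Y - of_int U / of_int V) / of_nat p ^ k = (of_int K / of_int (Y * V) :: rat)"
    using assms(5) by simp
  moreover have "p_integral p (of_int K / of_int (Y * V))"
    using assms(1-4) by (intro p_integral_of_int_div) auto
  ultimately show ?thesis
    using assms(1-4) by (simp add: rat_cong_def p_integral_of_int_div)
qed

lemma gbinomial_minus_quarter:
  "(- 1 / 4 :: 'a::field_char_0) gchoose n = (- 1) ^ n * of_nat (\<Prod>k<n. 4 * k + 1) / (4 ^ n * fact n)"
proof -
  have "pochhammer (1 / 4 :: 'a) n = (\<Prod>k<n. of_nat (4 * k + 1) / 4)"
    unfolding pochhammer_prod atLeast0LessThan by (intro prod.cong) (auto simp: field_simps)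
  then show ?thesis
    by (simp add: gbinomial_pochhammer prod_dividef)
qed

lemma prod_4k_plus_2_mult_fact:
  "(\<Prod>k\<le>m. 4 * k + 2) * fact m = 2 * (fact (2 * m + 1) :: nat)"
proof (induction m)
  case (Suc m)
  have "(\<Prod>k\<le>Suc m. 4 * k + 2) * fact (Suc m)
      = (4 * m + 6) * (m + 1) * ((\<Prod>k\<le>m. 4 * k + 2) * fact m)"
    by (simp add: algebra_simps)
  also have "\<dots> = 2 * ((2 * m + 3) * (2 * m + 2) * fact (2 * m + 1))"
    unfolding Suc.IH by (simp add: algebra_simps)
  finally show ?case
    by (simp add: algebra_simps)
qed simp

lemma four_pow_half_cong_one:
  assumes "prime p" and "odd p"
  shows "[(4 :: int) ^ ((p - 1) div 2) = 1] (mod int p)"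
proof -
  have "[2 ^ (p - 1) = 1] (mod p)"
  proof (rule fermat_theorem)
    show "\<not> p dvd 2"
      using assms primes_dvd_imp_eq[OF assms(1) two_is_prime_nat] by auto
  qed (rule assms(1))
  moreover obtain k where "p = 2 * k + 1"
    using \<open>odd p\<close> by (rule oddE)
  then have "(2 :: nat) ^ (p - 1) = 4 ^ ((p - 1) div 2)"
    by (simp add: power_mult)
  ultimately have "[int (4 ^ ((p - 1) div 2)) = int 1] (mod int p)"
    unfolding cong_int_iff by simp
  then show ?thesis
    by simp
qed

lemma prod_4k_plus_1_pairing:
  fixes p :: int
  assumes p: "p = 4 * int m + 3"
  shows "(\<Prod>k<2 * m + 1. of_nat (4 * k + 1)) * (2 * p - 1)
           = (\<Prod>k\<le>m. p\<^sup>2 - of_nat (4 * k + 2) ^ 2)"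
proof -
  have low: "(\<Prod>k<m + 1. of_nat (4 * k + 1)) = (\<Prod>k\<le>m. p - of_nat (4 * k + 2))"
  proof -
    have "(\<Prod>k<m + 1. p - of_nat (4 * k + 2)) = (\<Prod>k<m + 1. p - of_nat (4 * (m + 1 - Suc k) + 2))"
      by (rule prod.nat_diff_reindex[symmetric])
    also have "\<dots> = (\<Prod>k<m + 1. of_nat (4 * k + 1))"
      by (intro prod.cong) (auto simp: p of_nat_diff)
    finally show ?thesis
      by (simp add: lessThan_Suc_atMost)
  qed
  have high: "(\<Prod>k\<in>{m + 1..<2 * m + 1}. of_nat (4 * k + 1)) * (2 * p - 1)
      = (\<Prod>k\<le>m. p + of_nat (4 * k + 2))"
  proof -
    have "(\<Prod>k\<in>{m + 1..<2 * m + 1}. of_nat (4 * k + 1)) = (\<Prod>k<m. p + of_nat (4 * k + 2))"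
      by (subst prod.atLeastLessThan_shift_0) (auto simp: p lessThan_atLeast0 intro: prod.cong)
    moreover have "2 * p - 1 = p + of_nat (4 * m + 2)"
      by (simp add: p)
    ultimately show ?thesis
      by (simp add: lessThan_Suc_atMost[symmetric])
  qed
  have "(\<Prod>k<2 * m + 1. of_nat (4 * k + 1))
      = (\<Prod>k<m + 1. of_nat (4 * k + 1)) * (\<Prod>k\<in>{m + 1..<2 * m + 1}. (of_nat (4 * k + 1) :: int))"
    unfolding lessThan_atLeast0 by (rule prod.atLeastLessThan_concat[symmetric]) simp_all
  then have "(\<Prod>k<2 * m + 1. of_nat (4 * k + 1)) * (2 * p - 1)
      = (\<Prod>k\<le>m. (p - of_nat (4 * k + 2)) * (p + of_nat (4 * k + 2)))"
    using low high by (simp add: prod.distrib mult.assoc)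
  then show ?thesis
    by (simp add: power2_eq_square algebra_simps)
qed

lemma prod_4k_plus_1_cong:
  fixes p :: int
  assumes "p = 4 * int m + 3"
  shows "[(\<Prod>k<2 * m + 1. of_nat (4 * k + 1)) * (2 * p - 1)
           = (- 1) ^ (m + 1) * (\<Prod>k\<le>m. of_nat (4 * k + 2)) ^ 2] (mod p\<^sup>2)"
proof -
  have "[(\<Prod>k\<le>m. p\<^sup>2 - of_nat (4 * k + 2) ^ 2)
      = (\<Prod>k\<le>m. - (of_nat (4 * k + 2) ^ 2))] (mod p\<^sup>2)"
    by (intro cong_prod) (simp add: cong_iff_dvd_diff)
  also have "(\<Prod>k\<le>m. - (of_nat (4 * k + 2) ^ 2))
      = (\<Prod>k\<le>m. (- 1) * (of_nat (4 * k + 2) :: int) ^ 2)"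
    by simp
  also have "\<dots> = (- 1) ^ (m + 1) * (\<Prod>k\<le>m. of_nat (4 * k + 2)) ^ 2"
    by (simp only: prod.distrib prod_constant card_atMost prod_power_distrib Suc_eq_plus1)
  finally show ?thesis
    by (simp only: prod_4k_plus_1_pairing[OF assms])
qed

lemma prod_4k_plus_1_binomial_cong_scaled:
  fixes p Q :: int
  assumes p: "p = 4 * int m + 3" and "[Q = 1] (mod p)"
  defines "u \<equiv> fact m ^ 2 * (p + 1) * (2 * p - 1)"
  shows "[(- 1) ^ m * (Q - 3 * p) * (\<Prod>k<2 * m + 1. of_nat (4 * k + 1)) * u
           = Q * fact (2 * m + 1) * int ((2 * m + 1) choose m) * u] (mod p\<^sup>2)"
proof -
  define n where "n = 2 * m + 1"
  define P :: int where "P = (\<Prod>k<n. of_nat (4 * k + 1))"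
  define T :: int where "T = (\<Prod>k\<le>m. of_nat (4 * k + 2))"
  define C :: int where "C = int (n choose m)"
  obtain j where j: "Q = 1 + p * j"
    using \<open>[Q = 1] (mod p)\<close> by (metis cong_iff_lin cong_sym)
  have T_fact: "T * fact m = 2 * fact n"
    using arg_cong[OF prod_4k_plus_2_mult_fact[of m], of int] unfolding n_def T_def
    by (simp only: of_nat_mult of_nat_fact of_nat_prod of_nat_numeral)
  have C_u: "C * u = 4 * fact n * (2 * p - 1)"
  proof -
    have "fact m * fact (m + 1) * (n choose m) = fact n"
      using binomial_fact_lemma[of m n] unfolding n_def by simp
    from arg_cong[OF this, of int] have binom: "C * fact m * fact (m + 1) = fact n"
      unfolding C_def by (simp only: of_nat_mult of_nat_fact ac_simps)
    show ?thesis
      unfolding u_def using p by (simp flip: binom add: algebra_simps power2_eq_square)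
  qed
  have "(- 1) ^ m * (Q - 3 * p) * P * u
      = (- 1) ^ m * (Q - 3 * p) * (p + 1) * fact m ^ 2 * (P * (2 * p - 1))"
    unfolding u_def by (simp add: algebra_simps)
  also have "[\<dots> = (- 1) ^ m * (Q - 3 * p) * (p + 1) * fact m ^ 2 * ((- 1) ^ (m + 1) * T ^ 2)]
      (mod p\<^sup>2)"
    unfolding P_def T_def n_def using p by (intro cong_mult cong_refl prod_4k_plus_1_cong)
  also have "(- 1) ^ m * (Q - 3 * p) * (p + 1) * fact m ^ 2 * ((- 1) ^ (m + 1) * T ^ 2)
      = (3 * p - Q) * (p + 1) * (T * fact m) ^ 2"
  proof -
    have "(- 1) ^ m * (- 1) ^ (m + 1) = (- 1 :: int)"
      by (simp flip: power_add)
    then show ?thesis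
      by (simp add: algebra_simps power_mult_distrib)
  qed
  also have "[\<dots> = Q * (2 * p - 1) * (T * fact m) ^ 2] (mod p\<^sup>2)"
  proof -
    have "(3 * p - Q) * (p + 1) - Q * (2 * p - 1) = p\<^sup>2 * (3 - 3 * j)"
      by (simp add: j algebra_simps power2_eq_square)
    then have "[(3 * p - Q) * (p + 1) = Q * (2 * p - 1)] (mod p\<^sup>2)"
      by (simp add: cong_iff_dvd_diff)
    then show ?thesis
      by (rule cong_scalar_right)
  qed
  also have "Q * (2 * p - 1) * (T * fact m) ^ 2 = Q * fact n * (C * u)"
    unfolding T_fact C_u by (simp add: algebra_simps power2_eq_square)
  finally show ?thesis
    unfolding P_def C_def n_def by (simp only: mult.assoc)
qed

lemma prod_4k_plus_1_binomial_cong: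
  fixes p m :: nat
  assumes "prime p" and p: "p = 4 * m + 3"
  shows "[(- 1) ^ m * (4 ^ (2 * m + 1) - 3 * int p) * (\<Prod>k<2 * m + 1. of_nat (4 * k + 1))
           = 4 ^ (2 * m + 1) * fact (2 * m + 1) * int ((2 * m + 1) choose m)] (mod (int p)\<^sup>2)"
proof -
  define u :: int where "u = fact m ^ 2 * (int p + 1) * (2 * int p - 1)"
  have "[(4 :: int) ^ (2 * m + 1) = 1] (mod int p)"
    using four_pow_half_cong_one[OF assms(1)] p by simp
  then have "[(- 1) ^ m * (4 ^ (2 * m + 1) - 3 * int p) * (\<Prod>k<2 * m + 1. of_nat (4 * k + 1)) * u
      = 4 ^ (2 * m + 1) * fact (2 * m + 1) * int ((2 * m + 1) choose m) * u] (mod (int p)\<^sup>2)"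
    unfolding u_def using p by (intro prod_4k_plus_1_binomial_cong_scaled) simp_all
  moreover have "coprime u ((int p)\<^sup>2)"
  proof -
    have "\<not> p dvd fact m"
      using assms by (simp add: prime_dvd_fact_iff)
    then have "\<not> int p dvd fact m"
      by (metis int_dvd_int_iff of_nat_fact)
    moreover have "\<not> int p dvd int p + 1" "\<not> int p dvd 2 * int p - 1"
      using prime_gt_1_nat[OF assms(1)] by (auto simp: dvd_add_right_iff zdvd_not_zless dvd_diff_right_iff)
    ultimately show ?thesis
      using assms(1) prime_imp_coprime[of "int p" u] unfolding u_def
      by (simp add: prime_dvd_mult_iff prime_dvd_power_iff coprime_commute)
  qed
  ultimately show ?thesis
    by (simp add: cong_mult_rcancel)
qed

lemma prime_not_dvd_choose:
  assumes "prime p" and "k \<le> n" and "n < p"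
  shows "\<not> p dvd n choose k"
proof
  assume "p dvd n choose k"
  moreover have "n choose k dvd fact n"
    using binomial_fact_lemma[OF \<open>k \<le> n\<close>] by (metis dvd_triv_right)
  ultimately have "p dvd fact n"
    by (rule dvd_trans)
  with assms show False
    by (simp add: prime_dvd_fact_iff)
qed

lemma prime_not_dvd_prod_4k_plus_1:
  fixes p m :: nat
  assumes "prime p" and p: "p = 4 * m + 3"
  shows "\<not> p dvd (\<Prod>k<2 * m + 1. 4 * k + 1)"
proof
  assume "p dvd (\<Prod>k<2 * m + 1. 4 * k + 1)"
  then have "\<exists>k\<in>{..<2 * m + 1}. p dvd 4 * k + 1"
    by (rule prime_dvd_prod_iff[OF finite_lessThan assms(1), THEN iffD1])
  then obtain k where "k < 2 * m + 1" and "p dvd 4 * k + 1"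
    by blast
  moreover from \<open>k < 2 * m + 1\<close> have "4 * k + 1 < p * 2"
    using p by simp
  ultimately obtain c where c: "4 * k + 1 = p * c" and "c < 2"
    by (metis dvdE mult_less_cancel1)
  then have "4 * k + 1 = p"
    by (cases c) auto
  with p show False
    by presburger
qed

theorem lemma2p3:
  fixes p :: nat
  assumes "prime p" and "p > 5" and "p mod 4 = 3"
  shows "rat_cong (inverse ((- 1 / 4 :: rat) gchoose ((p - 1) div 2)))
           ((- 1) ^ ((p + 1) div 4) / of_nat (((p - 1) div 2) choose ((p - 3) div 4))
              * (1 - 3 * of_nat p + of_nat p * fermat_quot2 p))
           p 2"
proof -
  define m where "m = p div 4"
  define n where "n = 2 * m + 1"
  define P where "P = (\<Prod>k<n. 4 * k + 1)"
  define C where "C = n choose m"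
  have p: "p = 4 * m + 3"
    using assms(3) unfolding m_def by presburger
  have idx: "(p - 1) div 2 = n" "(p + 1) div 4 = m + 1" "(p - 3) div 4 = m"
    using p unfolding n_def by simp_all
  have "odd n"
    unfolding n_def by simp
  have "(- 1 / 4 :: rat) gchoose n = - (of_nat P / (4 ^ n * fact n))"
    using \<open>odd n\<close> unfolding gbinomial_minus_quarter P_def by simp
  then have lhs: "inverse ((- 1 / 4 :: rat) gchoose n) = of_int (4 ^ n * fact n) / of_int (- int P)"
    by simp
  have "of_nat p * fermat_quot2 p = (4 :: rat) ^ n - 1"
    using p unfolding fermat_quot2_def n_def by (simp add: power_mult)
  then have rhs: "(- 1) ^ (m + 1) / of_nat C * (1 - 3 * of_nat p + of_nat p * fermat_quot2 p)
      = of_int ((- 1) ^ (m + 1) * (4 ^ n - 3 * int p)) / (of_int (int C) :: rat)"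
    by simp
  have "[4 ^ n * fact n * int C = (- 1) ^ (m + 1) * (4 ^ n - 3 * int p) * - int P] (mod int p ^ 2)"
    using prod_4k_plus_1_binomial_cong[OF assms(1) p, folded n_def, THEN cong_sym]
    unfolding P_def C_def of_nat_prod by simp
  moreover have "\<not> p dvd P" "\<not> p dvd C"
    using assms(1) p prime_not_dvd_prod_4k_plus_1 prime_not_dvd_choose[of p m n]
    unfolding P_def C_def n_def by auto
  then have "coprime P p" "coprime C p" "P \<noteq> 0" "C \<noteq> 0"
    using prime_imp_coprime[OF assms(1)] by (auto simp: coprime_commute intro: Nat.gr0I)
  ultimately show ?thesis
    unfolding idx lhs rhs C_def[symmetric]
    using prime_gt_0_nat[OF assms(1)] by (intro rat_cong_of_int_divI) auto
qed

end
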